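(* Let $\mathbf A=(A;\vee,\wedge,\cdot,\rightarrow,0,1)$ be a complete residuated lattice and let $I$, $J$ be arbitrary sets. (i) Let $\phi\colon A^I\to A^J$ and $\rho\colon A^J\to A^I$ form a Galois connection between $A^I$ and $A^J$ (i.e. $y\le \phi(x)$ iff $\rho(y)\le x$ for all $x\in A^I$, $y\in A^J$). Then $\phi$ is a $\phi$-type mapping if and only if $\rho$ is a $\rho$-type mapping. (ii) Let $\delta\colon A^I\to A^J$ and $\epsilon\colon A^J\to A^I$ form a reversed Galois connection between $A^I$ and $A^J$ (i.e. both are antitone and $y\le\delta(x)$ iff $x\le\epsilon(y)$ for all $x\in A^I$, $y\in A^J$). Then $\delta$ is a $\delta$-type mapping if and only if $\epsilon$ is a $\delta$-type mapping.
   Context: A residuated lattice is an algebra $\mathbf A=(A;\vee,\wedge,\cdot,\rightarrow,0,1)$ such that $(A;\vee,\wedge,0,1)$ is a bounded lattice, $(A;\cdot,1)$ is a commutative monoid, and $x\cdot y\le z$ iff $x\le y\rightarrow z$. It is complete if its lattice reduct is a complete lattice. For a set $K$, $A^K$ carries the componentwise operations and order. For $d\in A$, $d^K\in A^K$ denotes the diagonal element $d^K(k)=d$ for all $k\in K$. A mapping between complete lattices is infima preserving if $f(\bigwedge M)=\bigwedge f(M)$ for every subset $M$; suprema preserving if $f(\bigvee M)=\bigvee f(M)$ for every $M$; suprema reversing if $f(\bigvee M)=\bigwedge f(M)$ for every $M$. For sets $K,L$: a mapping $\phi\colon A^K\to A^L$ is a $\phi$-type mapping if it is infima preserving and $d^L\rightarrow\phi(x)=\phi(d^K\rightarrow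 x)$ for all $d\in A$, $x\in A^K$; a mapping $\rho\colon A^L\to A^K$ is a $\rho$-type mapping if it is suprema preserving and $d^K\cdot\rho(x)=\rho(d^L\cdot x)$ for all $d\in A$, $x\in A^L$; a mapping $\delta\colon A^K\to A^L$ is a $\delta$-type mapping if it is suprema reversing and $d^L\rightarrow\delta(x)=\delta(d^K\cdot x)$ for all $d\in A$, $x\in A^K$ (this applies in particular with $K=J$, $L=I$ for maps $A^J\to A^I$). *)

theory Defs
  imports Main
begin

text \<open>A complete residuated lattice: the complete lattice reduct is the type class
  complete_lattice (0 = bot, 1 = top); mult is the commutative monoid operation with
  unit top (the lattice 1), and imp is its residuum.\<close>
definition complete_residuated_lattice ::
  "('a::complete_lattice \<Rightarrow> 'a \<Rightarrow> 'a) \<Rightarrow> ('a \<Rightarrow> 'a \<Rightarrow> 'a) \<Rightarrow> bool" where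
  "complete_residuated_lattice mult imp \<longleftrightarrow>
     (\<forall>x y z. mult (mult x y) z = mult x (mult y z)) \<and>
     (\<forall>x y. mult x y = mult y x) \<and>
     (\<forall>x. mult x top = x) \<and>
     (\<forall>x y z. mult x y \<le> z \<longleftrightarrow> x \<le> imp y z)"

text \<open>A^K is the function type 'k => 'a with the pointwise (componentwise) order.\<close>

definition phi_type ::
  "('a::complete_lattice \<Rightarrow> 'a \<Rightarrow> 'a) \<Rightarrow> (('k \<Rightarrow> 'a) \<Rightarrow> ('l \<Rightarrow> 'a)) \<Rightarrow> bool" where
  "phi_type imp \<phi> \<longleftrightarrow>
     (\<forall>M. \<phi> (Inf M) = Inf (\<phi> ` M)) \<and>
     (\<forall>d x. (\<lambda>l. imp d (\<phi> x l)) = \<phi> (\<lambda>k. imp d (x k)))"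

definition rho_type ::
  "('a::complete_lattice \<Rightarrow> 'a \<Rightarrow> 'a) \<Rightarrow> (('l \<Rightarrow> 'a) \<Rightarrow> ('k \<Rightarrow> 'a)) \<Rightarrow> bool" where
  "rho_type mult \<rho> \<longleftrightarrow>
     (\<forall>M. \<rho> (Sup M) = Sup (\<rho> ` M)) \<and>
     (\<forall>d x. (\<lambda>k. mult d (\<rho> x k)) = \<rho> (\<lambda>l. mult d (x l)))"

definition delta_type ::
  "('a::complete_lattice \<Rightarrow> 'a \<Rightarrow> 'a) \<Rightarrow> ('a \<Rightarrow> 'a \<Rightarrow> 'a) \<Rightarrow>
   (('k \<Rightarrow> 'a) \<Rightarrow> ('l \<Rightarrow> 'a)) \<Rightarrow> bool" where
  "delta_type mult imp \<delta> \<longleftrightarrow>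
     (\<forall>M. \<delta> (Sup M) = Inf (\<delta> ` M)) \<and>
     (\<forall>d x. (\<lambda>l. imp d (\<delta> x l)) = \<delta> (\<lambda>k. mult d (x k)))"

end

theory Submission
  imports Defs
begin

(*
  Both parts are instances of the uniqueness of adjoints.  Write L_d x = d * x and
  R_d x = d -> x (pointwise on A^K); residuation says exactly that L_d is the lower
  adjoint of R_d.  If rho is the lower adjoint of phi, then phi o R_d is the upper
  adjoint of L_d o rho, and R_d o phi is the upper adjoint of rho o L_d; since an
  adjoint determines its partner, phi o R_d = R_d o phi iff L_d o rho = rho o L_d.
  The preservation of infima by phi and of suprema by rho hold for any Galois
  connection, so (i) follows.  For (ii) the same reasoning applies to reversed Galois
  connections: composing with L_d / R_d yields two reversed pairs, and the single
  equation defining a delta-type map for delta is, by uniqueness, the one for epsilon.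
*)

lemma eq_by_lower_bounds: "(\<And>z::'b::order. z \<le> a \<longleftrightarrow> z \<le> b) \<Longrightarrow> a = b"
  by (meson order.antisym order.refl)

lemma eq_by_upper_bounds: "(\<And>z::'b::order. a \<le> z \<longleftrightarrow> b \<le> z) \<Longrightarrow> a = b"
  by (meson order.antisym order.refl)

definition galois :: "('b::order \<Rightarrow> 'c::order) \<Rightarrow> ('c \<Rightarrow> 'b) \<Rightarrow> bool" where
  "galois L R \<longleftrightarrow> (\<forall>x y. L y \<le> x \<longleftrightarrow> y \<le> R x)"

definition rev_galois :: "('b::order \<Rightarrow> 'c::order) \<Rightarrow> ('c \<Rightarrow> 'b) \<Rightarrow> bool" where
  "rev_galois f g \<longleftrightarrow> (\<forall>x y. y \<le> f x \<longleftrightarrow> x \<le> g y)"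

lemma galois_upper_Inf:
  fixes R :: "'c::complete_lattice \<Rightarrow> 'b::complete_lattice"
  assumes gal: "galois L R"
  shows "R (Inf M) = Inf (R ` M)"
proof (rule eq_by_lower_bounds)
  fix z
  have "z \<le> R (Inf M) \<longleftrightarrow> L z \<le> Inf M" using gal by (simp add: galois_def)
  also have "\<dots> \<longleftrightarrow> (\<forall>x\<in>M. z \<le> R x)" using gal by (simp add: galois_def le_Inf_iff)
  finally show "z \<le> R (Inf M) \<longleftrightarrow> z \<le> Inf (R ` M)" by (simp add: le_INF_iff)
qed

lemma galois_lower_Sup:
  fixes L :: "'b::complete_lattice \<Rightarrow> 'c::complete_lattice"
  assumes gal: "galois L R"
  shows "L (Sup M) = Sup (L ` M)"
proof (rule eq_by_upper_bounds)
  fix z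
  have "L (Sup M) \<le> z \<longleftrightarrow> Sup M \<le> R z" using gal by (simp add: galois_def)
  also have "\<dots> \<longleftrightarrow> (\<forall>y\<in>M. L y \<le> z)" using gal by (simp add: galois_def Sup_le_iff)
  finally show "L (Sup M) \<le> z \<longleftrightarrow> Sup (L ` M) \<le> z" by (simp add: SUP_le_iff)
qed

lemma rev_galois_Sup_Inf:
  fixes f :: "'b::complete_lattice \<Rightarrow> 'c::complete_lattice"
  assumes gal: "rev_galois f g"
  shows "f (Sup M) = Inf (f ` M)"
proof (rule eq_by_lower_bounds)
  fix z
  have "z \<le> f (Sup M) \<longleftrightarrow> Sup M \<le> g z" using gal by (simp add: rev_galois_def)
  also have "\<dots> \<longleftrightarrow> (\<forall>x\<in>M. z \<le> f x)" using gal by (simp add: rev_galois_def Sup_le_iff)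
  finally show "z \<le> f (Sup M) \<longleftrightarrow> z \<le> Inf (f ` M)" by (simp add: le_INF_iff)
qed

lemma galois_comp:
  "galois L R \<Longrightarrow> galois L' R' \<Longrightarrow> galois (\<lambda>y. L (L' y)) (\<lambda>x. R' (R x))"
  unfolding galois_def by blast

lemma rev_galois_comp_left:
  "rev_galois f g \<Longrightarrow> galois L R \<Longrightarrow> rev_galois (\<lambda>x. R (f x)) (\<lambda>y. g (L y))"
  unfolding galois_def rev_galois_def by blast

lemma rev_galois_comp_right:
  "rev_galois f g \<Longrightarrow> galois L R \<Longrightarrow> rev_galois (\<lambda>x. f (L x)) (\<lambda>y. R (g y))"
  unfolding galois_def rev_galois_def by blast

lemma galois_unique:
  assumes gal: "galois L R" and gal': "galois L' R'"
  shows "L = L' \<longleftrightarrow> R = R'"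
proof
  assume "L = L'"
  show "R = R'"
  proof
    fix x
    have "y \<le> R x \<longleftrightarrow> y \<le> R' x" for y
      using gal gal' \<open>L = L'\<close> unfolding galois_def by blast
    then show "R x = R' x" by (rule eq_by_lower_bounds)
  qed
next
  assume "R = R'"
  show "L = L'"
  proof
    fix y
    have "L y \<le> x \<longleftrightarrow> L' y \<le> x" for x
      using gal gal' \<open>R = R'\<close> unfolding galois_def by blast
    then show "L y = L' y" by (rule eq_by_upper_bounds)
  qed
qed

lemma rev_galois_unique:
  assumes gal: "rev_galois f g" and gal': "rev_galois f' g'"
  shows "f = f' \<longleftrightarrow> g = g'"
proof
  assume "f = f'"
  show "g = g'"
  proof
    fix y
    have "x \<le> g y \<longleftrightarrow> x \<le> g' y" for x
      using gal gal' \<open>f = f'\<close> unfolding rev_galois_def by blast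
    then show "g y = g' y" by (rule eq_by_lower_bounds)
  qed
next
  assume "g = g'"
  show "f = f'"
  proof
    fix x
    have "y \<le> f x \<longleftrightarrow> y \<le> f' x" for y
      using gal gal' \<open>g = g'\<close> unfolding rev_galois_def by blast
    then show "f x = f' x" by (rule eq_by_lower_bounds)
  qed
qed

lemma residuation_galois:
  assumes "complete_residuated_lattice mult imp"
  shows "galois (\<lambda>x k. mult d (x k)) (\<lambda>x k. imp d (x k))"
  using assms unfolding complete_residuated_lattice_def galois_def le_fun_def
  by metis

text \<open>(i): for a Galois connection, the scalar condition for phi is the one for rho, read
  through uniqueness of adjoints.\<close>

lemma phi_type_iff_rho_type:
  fixes \<phi> :: "('i \<Rightarrow> 'a::complete_lattice) \<Rightarrow> ('j \<Rightarrow> 'a)" and \<rho> :: "('j \<Rightarrow> 'a) \<Rightarrow> ('i \<Rightarrow> 'a)"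
  assumes res: "complete_residuated_lattice mult imp" and gal: "galois \<rho> \<phi>"
  shows "phi_type imp \<phi> \<longleftrightarrow> rho_type mult \<rho>"
proof -
  have scalar: "(\<forall>x. (\<lambda>l. imp d (\<phi> x l)) = \<phi> (\<lambda>k. imp d (x k))) \<longleftrightarrow>
                (\<forall>y. (\<lambda>k. mult d (\<rho> y k)) = \<rho> (\<lambda>l. mult d (y l)))" for d
  proof -
    have "(\<forall>x. (\<lambda>l. imp d (\<phi> x l)) = \<phi> (\<lambda>k. imp d (x k))) \<longleftrightarrow>
          (\<lambda>x l. imp d (\<phi> x l)) = (\<lambda>x. \<phi> (\<lambda>k. imp d (x k)))"
      by (rule fun_eq_iff[symmetric])
    also have "\<dots> \<longleftrightarrow> (\<lambda>x. \<phi> (\<lambda>k. imp d (x k))) = (\<lambda>x l. imp d (\<phi> x l))"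
      by (rule eq_commute)
    also have "\<dots> \<longleftrightarrow> (\<lambda>y k. mult d (\<rho> y k)) = (\<lambda>y. \<rho> (\<lambda>l. mult d (y l)))"
      by (rule galois_unique[OF galois_comp[OF residuation_galois[OF res] gal]
                                galois_comp[OF gal residuation_galois[OF res]], symmetric])
    also have "\<dots> \<longleftrightarrow> (\<forall>y. (\<lambda>k. mult d (\<rho> y k)) = \<rho> (\<lambda>l. mult d (y l)))"
      by (rule fun_eq_iff)
    finally show ?thesis .
  qed
  show ?thesis
    unfolding phi_type_def rho_type_def
    by (simp add: scalar galois_upper_Inf[OF gal] galois_lower_Sup[OF gal])
qed

text \<open>(ii): the equation making delta a delta-type map is, by uniqueness of reversed
  adjoints, the equation making epsilon one.\<close>

lemma delta_type_rev_galois: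
  fixes \<delta> :: "('i \<Rightarrow> 'a::complete_lattice) \<Rightarrow> ('j \<Rightarrow> 'a)" and \<epsilon> :: "('j \<Rightarrow> 'a) \<Rightarrow> ('i \<Rightarrow> 'a)"
  assumes res: "complete_residuated_lattice mult imp" and gal: "rev_galois \<delta> \<epsilon>"
  shows "delta_type mult imp \<delta> \<longleftrightarrow> delta_type mult imp \<epsilon>"
proof -
  have scalar: "(\<forall>x. (\<lambda>l. imp d (\<delta> x l)) = \<delta> (\<lambda>k. mult d (x k))) \<longleftrightarrow>
                (\<forall>y. (\<lambda>k. imp d (\<epsilon> y k)) = \<epsilon> (\<lambda>l. mult d (y l)))" for d
  proof -
    have "(\<forall>x. (\<lambda>l. imp d (\<delta> x l)) = \<delta> (\<lambda>k. mult d (x k))) \<longleftrightarrow>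
          (\<lambda>x l. imp d (\<delta> x l)) = (\<lambda>x. \<delta> (\<lambda>k. mult d (x k)))"
      by (rule fun_eq_iff[symmetric])
    also have "\<dots> \<longleftrightarrow> (\<lambda>y. \<epsilon> (\<lambda>l. mult d (y l))) = (\<lambda>y k. imp d (\<epsilon> y k))"
      by (rule rev_galois_unique[OF rev_galois_comp_left[OF gal residuation_galois[OF res]]
                                    rev_galois_comp_right[OF gal residuation_galois[OF res]]])
    also have "\<dots> \<longleftrightarrow> (\<lambda>y k. imp d (\<epsilon> y k)) = (\<lambda>y. \<epsilon> (\<lambda>l. mult d (y l)))"
      by (rule eq_commute)
    also have "\<dots> \<longleftrightarrow> (\<forall>y. (\<lambda>k. imp d (\<epsilon> y k)) = \<epsilon> (\<lambda>l. mult d (y l)))"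
      by (rule fun_eq_iff)
    finally show ?thesis .
  qed
  have gal_sym: "rev_galois \<epsilon> \<delta>"
    using gal unfolding rev_galois_def by blast
  show ?thesis
    unfolding delta_type_def
    by (simp add: scalar rev_galois_Sup_Inf[OF gal] rev_galois_Sup_Inf[OF gal_sym])
qed

theorem lemma4:
  fixes mult imp :: "'a::complete_lattice \<Rightarrow> 'a \<Rightarrow> 'a"
  assumes "complete_residuated_lattice mult imp"
  shows "(\<forall>(\<phi>::('i \<Rightarrow> 'a) \<Rightarrow> ('j \<Rightarrow> 'a)) (\<rho>::('j \<Rightarrow> 'a) \<Rightarrow> ('i \<Rightarrow> 'a)).
           (\<forall>x y. y \<le> \<phi> x \<longleftrightarrow> \<rho> y \<le> x) \<longrightarrow>
           (phi_type imp \<phi> \<longleftrightarrow> rho_type mult \<rho>)) \<and>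
         (\<forall>(\<delta>::('i \<Rightarrow> 'a) \<Rightarrow> ('j \<Rightarrow> 'a)) (\<epsilon>::('j \<Rightarrow> 'a) \<Rightarrow> ('i \<Rightarrow> 'a)).
           (antimono \<delta> \<and> antimono \<epsilon> \<and> (\<forall>x y. y \<le> \<delta> x \<longleftrightarrow> x \<le> \<epsilon> y)) \<longrightarrow>
           (delta_type mult imp \<delta> \<longleftrightarrow> delta_type mult imp \<epsilon>))"
proof (intro conjI allI impI)
  fix \<phi> :: "('i \<Rightarrow> 'a) \<Rightarrow> ('j \<Rightarrow> 'a)" and \<rho> :: "('j \<Rightarrow> 'a) \<Rightarrow> ('i \<Rightarrow> 'a)"
  assume "\<forall>x y. y \<le> \<phi> x \<longleftrightarrow> \<rho> y \<le> x"
  then have "galois \<rho> \<phi>" unfolding galois_def by blast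
  then show "phi_type imp \<phi> \<longleftrightarrow> rho_type mult \<rho>"
    by (rule phi_type_iff_rho_type[OF assms])
next
  fix \<delta> :: "('i \<Rightarrow> 'a) \<Rightarrow> ('j \<Rightarrow> 'a)" and \<epsilon> :: "('j \<Rightarrow> 'a) \<Rightarrow> ('i \<Rightarrow> 'a)"
  assume "antimono \<delta> \<and> antimono \<epsilon> \<and> (\<forall>x y. y \<le> \<delta> x \<longleftrightarrow> x \<le> \<epsilon> y)"
  then have "rev_galois \<delta> \<epsilon>" unfolding rev_galois_def by blast
  then show "delta_type mult imp \<delta> \<longleftrightarrow> delta_type mult imp \<epsilon>"
    by (rule delta_type_rev_galois[OF assms])
qed

end
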